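(* Let $V=\{0,\tfrac12,1\}$ and consider languages with a constant expressive semantics whose consequence relation is induced by one of the five intersective mixed consequence truth-relations $ss=\models_{\{1\},\{1\}}$, $tt=\models_{\{1,\frac12\},\{1,\frac12\}}$, $st=\models_{\{1\},\{1,\frac12\}}$, $ts=\models_{\{1,\frac12\},\{1\}}$, and $ss\cap tt$. Each of these five relations admits a G-disjunction and a G-conjunction. Each of $ss$, $tt$, $st$, $ts$ admits a G-negation and a G-conditional, whereas $ss\cap tt$ admits neither a G-negation nor a G-conditional.
   Context: $\models_{\mathcal{D}_p,\mathcal{D}_c}$ holds between $\gamma,\delta\subseteq V$ iff ($\gamma\subseteq\mathcal{D}_p\Rightarrow\delta\cap\mathcal{D}_c\neq\emptyset$). A semantics: set of valuations mapping atoms to $V$, interpreting each connective by a fixed truth function, extended compositionally, with every assignment of values to finitely many distinct atoms realized; constant expressive: every $\alpha\in V$ is the constant value of some formula. Induced consequence: $\Gamma\vdash\Delta$ iff $v(\Gamma)\models v(\Delta)$ for all valuations $v$; write $\Gamma,A$ for $\Gamma\cup\{A\}$. A relation admits a G-connective if some truth function, assigned to a connective, makes it satisfy, for all sets $\Gamma,\Delta$ and formulas $A,B$: G-conjunction: $\Gamma,A\wedge B\vdash\Delta$ iff $\Gamma,A,B\vdash\Delta$; $\Gamma\vdash A\wedge B,\Delta$ iff ($\Gamma\vdash A,\Delta$ and $\Gamma\vdash B,\Delta$). G-disjunction: $\Gamma\vdash A\vee B,\Delta$ iff $\Gamma\vdash A,B,\Delta$; $\Gamma,A\vee B\vdash\Delta$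 iff ($\Gamma,A\vdash\Delta$ and $\Gamma,B\vdash\Delta$). G-negation: $\Gamma,\neg A\vdash\Delta$ iff $\Gamma\vdash A,\Delta$; $\Gamma\vdash\neg A,\Delta$ iff $\Gamma,A\vdash\Delta$. G-conditional: $\Gamma\vdash A\to B,\Delta$ iff $\Gamma,A\vdash B,\Delta$; $\Gamma,A\to B\vdash\Delta$ iff ($\Gamma\vdash A,\Delta$ and $\Gamma,B\vdash\Delta$). *)

theory Defs
  imports Main
begin

(* Truth values V = {0, 1/2, 1}:  V0 = 0,  Vh = 1/2,  V1 = 1 *)
datatype tv = V0 | Vh | V1

datatype 'c fm = Atom nat | Op 'c "'c fm list"

fun wf :: "('c \<Rightarrow> nat) \<Rightarrow> 'c fm \<Rightarrow> bool" where
  "wf ar (Atom n) = True"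
| "wf ar (Op c As) = (length As = ar c \<and> list_all (wf ar) As)"

fun eval :: "('c \<Rightarrow> tv list \<Rightarrow> tv) \<Rightarrow> (nat \<Rightarrow> tv) \<Rightarrow> 'c fm \<Rightarrow> tv" where
  "eval I v (Atom n) = v n"
| "eval I v (Op c As) = I c (map (eval I v) As)"

definition realizes_finite :: "(nat \<Rightarrow> tv) set \<Rightarrow> bool" where
  "realizes_finite S \<longleftrightarrow> (\<forall>X a. finite X \<longrightarrow> (\<exists>v\<in>S. \<forall>n\<in>X. v n = a n))"

definition const_expressive ::
  "('c \<Rightarrow> nat) \<Rightarrow> ('c \<Rightarrow> tv list \<Rightarrow> tv) \<Rightarrow> (nat \<Rightarrow> tv) set \<Rightarrow> bool" where
  "const_expressive ar I S \<longleftrightarrow> (\<forall>\<alpha>. \<exists>A. wf ar A \<and> (\<forall>v\<in>S. eval I v A = \<alpha>))"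

definition mixed :: "tv set \<Rightarrow> tv set \<Rightarrow> tv set \<Rightarrow> tv set \<Rightarrow> bool" where
  "mixed Dp Dc \<gamma> \<delta> \<longleftrightarrow> (\<gamma> \<subseteq> Dp \<longrightarrow> \<delta> \<inter> Dc \<noteq> {})"

definition ss :: "tv set \<Rightarrow> tv set \<Rightarrow> bool" where "ss = mixed {V1} {V1}"
definition tt :: "tv set \<Rightarrow> tv set \<Rightarrow> bool" where "tt = mixed {V1, Vh} {V1, Vh}"
definition st :: "tv set \<Rightarrow> tv set \<Rightarrow> bool" where "st = mixed {V1} {V1, Vh}"
definition ts :: "tv set \<Rightarrow> tv set \<Rightarrow> bool" where "ts = mixed {V1, Vh} {V1}"
definition sstt :: "tv set \<Rightarrow> tv set \<Rightarrow> bool" where "sstt \<gamma> \<delta> \<longleftrightarrow> ss \<gamma> \<delta> \<and> tt \<gamma> \<delta>"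

definition cons ::
  "(tv set \<Rightarrow> tv set \<Rightarrow> bool) \<Rightarrow> ('c \<Rightarrow> tv list \<Rightarrow> tv) \<Rightarrow> (nat \<Rightarrow> tv) set
   \<Rightarrow> 'c fm set \<Rightarrow> 'c fm set \<Rightarrow> bool" where
  "cons R I S \<Gamma> \<Delta> \<longleftrightarrow> (\<forall>v\<in>S. R (eval I v ` \<Gamma>) (eval I v ` \<Delta>))"

(* extension of the language by one new connective (None) of arity k with truth function g *)
definition ext_ar :: "('c \<Rightarrow> nat) \<Rightarrow> nat \<Rightarrow> 'c option \<Rightarrow> nat" where
  "ext_ar ar k o' = (case o' of None \<Rightarrow> k | Some c \<Rightarrow> ar c)"

definition ext_I :: "('c \<Rightarrow> tv list \<Rightarrow> tv) \<Rightarrow> (tv list \<Rightarrow> tv) \<Rightarrow> 'c option \<Rightarrow> tv list \<Rightarrow> tv" where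
  "ext_I I g o' = (case o' of None \<Rightarrow> g | Some c \<Rightarrow> I c)"

definition G_conj :: "'a set \<Rightarrow> ('a set \<Rightarrow> 'a set \<Rightarrow> bool) \<Rightarrow> ('a \<Rightarrow> 'a \<Rightarrow> 'a) \<Rightarrow> bool" where
  "G_conj W Cn cj \<longleftrightarrow> (\<forall>\<Gamma> \<Delta> A B. \<Gamma> \<subseteq> W \<longrightarrow> \<Delta> \<subseteq> W \<longrightarrow> A \<in> W \<longrightarrow> B \<in> W \<longrightarrow>
     (Cn (insert (cj A B) \<Gamma>) \<Delta> \<longleftrightarrow> Cn (insert A (insert B \<Gamma>)) \<Delta>) \<and>
     (Cn \<Gamma> (insert (cj A B) \<Delta>) \<longleftrightarrow> Cn \<Gamma> (insert A \<Delta>) \<and> Cn \<Gamma> (insert B \<Delta>)))"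

definition G_disj :: "'a set \<Rightarrow> ('a set \<Rightarrow> 'a set \<Rightarrow> bool) \<Rightarrow> ('a \<Rightarrow> 'a \<Rightarrow> 'a) \<Rightarrow> bool" where
  "G_disj W Cn dj \<longleftrightarrow> (\<forall>\<Gamma> \<Delta> A B. \<Gamma> \<subseteq> W \<longrightarrow> \<Delta> \<subseteq> W \<longrightarrow> A \<in> W \<longrightarrow> B \<in> W \<longrightarrow>
     (Cn \<Gamma> (insert (dj A B) \<Delta>) \<longleftrightarrow> Cn \<Gamma> (insert A (insert B \<Delta>))) \<and>
     (Cn (insert (dj A B) \<Gamma>) \<Delta> \<longleftrightarrow> Cn (insert A \<Gamma>) \<Delta> \<and> Cn (insert B \<Gamma>) \<Delta>))"

definition G_neg :: "'a set \<Rightarrow> ('a set \<Rightarrow> 'a set \<Rightarrow> bool) \<Rightarrow> ('a \<Rightarrow> 'a) \<Rightarrow> bool" where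
  "G_neg W Cn ng \<longleftrightarrow> (\<forall>\<Gamma> \<Delta> A. \<Gamma> \<subseteq> W \<longrightarrow> \<Delta> \<subseteq> W \<longrightarrow> A \<in> W \<longrightarrow>
     (Cn (insert (ng A) \<Gamma>) \<Delta> \<longleftrightarrow> Cn \<Gamma> (insert A \<Delta>)) \<and>
     (Cn \<Gamma> (insert (ng A) \<Delta>) \<longleftrightarrow> Cn (insert A \<Gamma>) \<Delta>))"

definition G_cond :: "'a set \<Rightarrow> ('a set \<Rightarrow> 'a set \<Rightarrow> bool) \<Rightarrow> ('a \<Rightarrow> 'a \<Rightarrow> 'a) \<Rightarrow> bool" where
  "G_cond W Cn im \<longleftrightarrow> (\<forall>\<Gamma> \<Delta> A B. \<Gamma> \<subseteq> W \<longrightarrow> \<Delta> \<subseteq> W \<longrightarrow> A \<in> W \<longrightarrow> B \<in> W \<longrightarrow>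
     (Cn \<Gamma> (insert (im A B) \<Delta>) \<longleftrightarrow> Cn (insert A \<Gamma>) (insert B \<Delta>)) \<and>
     (Cn (insert (im A B) \<Gamma>) \<Delta> \<longleftrightarrow> Cn \<Gamma> (insert A \<Delta>) \<and> Cn (insert B \<Gamma>) \<Delta>))"

(* "R admits a G-connective": some truth function, assigned to a new connective added to the
   language (ar, I, S), makes the induced consequence relation satisfy the G-rules *)
definition admits_conj where
  "admits_conj R ar I S \<longleftrightarrow> (\<exists>f :: tv \<Rightarrow> tv \<Rightarrow> tv.
     G_conj {A. wf (ext_ar ar 2) A} (cons R (ext_I I (\<lambda>xs. f (xs!0) (xs!1))) S) (\<lambda>A B. Op None [A, B]))"

definition admits_disj where
  "admits_disj R ar I S \<longleftrightarrow> (\<exists>f :: tv \<Rightarrow> tv \<Rightarrow> tv.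
     G_disj {A. wf (ext_ar ar 2) A} (cons R (ext_I I (\<lambda>xs. f (xs!0) (xs!1))) S) (\<lambda>A B. Op None [A, B]))"

definition admits_neg where
  "admits_neg R ar I S \<longleftrightarrow> (\<exists>f :: tv \<Rightarrow> tv.
     G_neg {A. wf (ext_ar ar 1) A} (cons R (ext_I I (\<lambda>xs. f (xs!0))) S) (\<lambda>A. Op None [A]))"

definition admits_cond where
  "admits_cond R ar I S \<longleftrightarrow> (\<exists>f :: tv \<Rightarrow> tv \<Rightarrow> tv.
     G_cond {A. wf (ext_ar ar 2) A} (cons R (ext_I I (\<lambda>xs. f (xs!0) (xs!1))) S) (\<lambda>A B. Op None [A, B]))"

end

theory Submission
  imports Defs
begin

(* A truth function satisfying the G-rules on sets of truth values yields a G-connective of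
   the induced consequence relation.  Conversely, once every value is the constant value of a
   formula and some valuation exists, instantiating the G-rules at constant formulas recovers
   every instance on truth values, so admitting a connective is a question about the truth
   relation alone.  There, min and max are a G-conjunction and a G-disjunction for every mixed
   relation with upward closed designated sets, and both properties survive intersecting
   relations.  ss and tt have the Boolean negations reading 1/2 as 0 resp. as 1, st and ts the
   Kleene negation, and max (\<not>a) b is then a G-conditional.  For ss \<inter> tt no negation
   exists: since the empty premise set does not entail 1/2 (under ss), the left rule forces
   \<not>1/2 = 1, so the right rule would make 1/2 entail the empty conclusion set, which fails
   under tt.  A G-conditional would give the G-negation a \<mapsto> (a \<rightarrow> 0). *)

fun tv_rank :: "tv \<Rightarrow> nat" where
  "tv_rank V0 = 0" | "tv_rank Vh = 1" | "tv_rank V1 = 2"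

instantiation tv :: linorder
begin

definition less_eq_tv :: "tv \<Rightarrow> tv \<Rightarrow> bool" where
  "a \<le> b \<longleftrightarrow> tv_rank a \<le> tv_rank b"

definition less_tv :: "tv \<Rightarrow> tv \<Rightarrow> bool" where
  "a < b \<longleftrightarrow> tv_rank a < tv_rank b"

instance
  by standard (auto simp: less_eq_tv_def less_tv_def elim!: tv_rank.elims)

end

definition up_closed :: "'a::order set \<Rightarrow> bool" where
  "up_closed U \<longleftrightarrow> (\<forall>x y. x \<in> U \<longrightarrow> x \<le> y \<longrightarrow> y \<in> U)"

lemma up_closed_min_iff: "up_closed U \<Longrightarrow> min a b \<in> U \<longleftrightarrow> a \<in> U \<and> b \<in> U"
  for a b :: "'a::linorder"
  unfolding up_closed_def by (metis min.cobounded1 min.cobounded2 min_def)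

lemma up_closed_max_iff: "up_closed U \<Longrightarrow> max a b \<in> U \<longleftrightarrow> a \<in> U \<or> b \<in> U"
  for a b :: "'a::linorder"
  unfolding up_closed_def by (metis max.cobounded1 max.cobounded2 max_def)

lemma tv_all: "(\<forall>a. P a) \<longleftrightarrow> P V0 \<and> P Vh \<and> P V1"
  by (metis tv.exhaust)

lemma up_closed_designated: "up_closed {V1}" "up_closed {V1, Vh}"
  unfolding up_closed_def by (simp_all add: tv_all less_eq_tv_def)

definition G_conj_tv :: "(tv set \<Rightarrow> tv set \<Rightarrow> bool) \<Rightarrow> (tv \<Rightarrow> tv \<Rightarrow> tv) \<Rightarrow> bool" where
  "G_conj_tv R f \<longleftrightarrow> (\<forall>\<gamma> \<delta> a b. (R (insert (f a b) \<gamma>) \<delta> \<longleftrightarrow> R (insert a (insert b \<gamma>)) \<delta>)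
     \<and> (R \<gamma> (insert (f a b) \<delta>) \<longleftrightarrow> R \<gamma> (insert a \<delta>) \<and> R \<gamma> (insert b \<delta>)))"

definition G_disj_tv :: "(tv set \<Rightarrow> tv set \<Rightarrow> bool) \<Rightarrow> (tv \<Rightarrow> tv \<Rightarrow> tv) \<Rightarrow> bool" where
  "G_disj_tv R f \<longleftrightarrow> (\<forall>\<gamma> \<delta> a b. (R \<gamma> (insert (f a b) \<delta>) \<longleftrightarrow> R \<gamma> (insert a (insert b \<delta>)))
     \<and> (R (insert (f a b) \<gamma>) \<delta> \<longleftrightarrow> R (insert a \<gamma>) \<delta> \<and> R (insert b \<gamma>) \<delta>))"

definition G_neg_tv :: "(tv set \<Rightarrow> tv set \<Rightarrow> bool) \<Rightarrow> (tv \<Rightarrow> tv) \<Rightarrow> bool" where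
  "G_neg_tv R f \<longleftrightarrow> (\<forall>\<gamma> \<delta> a. (R (insert (f a) \<gamma>) \<delta> \<longleftrightarrow> R \<gamma> (insert a \<delta>))
     \<and> (R \<gamma> (insert (f a) \<delta>) \<longleftrightarrow> R (insert a \<gamma>) \<delta>))"

definition G_cond_tv :: "(tv set \<Rightarrow> tv set \<Rightarrow> bool) \<Rightarrow> (tv \<Rightarrow> tv \<Rightarrow> tv) \<Rightarrow> bool" where
  "G_cond_tv R f \<longleftrightarrow> (\<forall>\<gamma> \<delta> a b. (R \<gamma> (insert (f a b) \<delta>) \<longleftrightarrow> R (insert a \<gamma>) (insert b \<delta>))
     \<and> (R (insert (f a b) \<gamma>) \<delta> \<longleftrightarrow> R \<gamma> (insert a \<delta>) \<and> R (insert b \<gamma>) \<delta>))"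

lemma G_conj_tv_mixed_min:
  assumes "up_closed Dp" "up_closed Dc"
  shows "G_conj_tv (mixed Dp Dc) min"
  using up_closed_min_iff[OF assms(1)] up_closed_min_iff[OF assms(2)]
  unfolding G_conj_tv_def mixed_def by auto

lemma G_disj_tv_mixed_max:
  assumes "up_closed Dp" "up_closed Dc"
  shows "G_disj_tv (mixed Dp Dc) max"
  using up_closed_max_iff[OF assms(1)] up_closed_max_iff[OF assms(2)]
  unfolding G_disj_tv_def mixed_def by auto

lemma G_conj_tv_inf:
  "G_conj_tv R1 f \<Longrightarrow> G_conj_tv R2 f \<Longrightarrow> G_conj_tv (\<lambda>\<gamma> \<delta>. R1 \<gamma> \<delta> \<and> R2 \<gamma> \<delta>) f"
  unfolding G_conj_tv_def by blast

lemma G_disj_tv_inf: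
  "G_disj_tv R1 f \<Longrightarrow> G_disj_tv R2 f \<Longrightarrow> G_disj_tv (\<lambda>\<gamma> \<delta>. R1 \<gamma> \<delta> \<and> R2 \<gamma> \<delta>) f"
  unfolding G_disj_tv_def by blast

lemma sstt_eq: "sstt = (\<lambda>\<gamma> \<delta>. ss \<gamma> \<delta> \<and> tt \<gamma> \<delta>)"
  by (intro ext) (simp add: sstt_def)

lemma G_conj_tv_min:
  assumes "R \<in> {ss, tt, st, ts, sstt}"
  shows "G_conj_tv R min"
proof -
  have "G_conj_tv ss min" "G_conj_tv tt min" "G_conj_tv st min" "G_conj_tv ts min"
    unfolding ss_def tt_def st_def ts_def by (intro G_conj_tv_mixed_min up_closed_designated)+
  then show ?thesis
    using assms unfolding sstt_eq by (auto intro: G_conj_tv_inf)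
qed

lemma G_disj_tv_max:
  assumes "R \<in> {ss, tt, st, ts, sstt}"
  shows "G_disj_tv R max"
proof -
  have "G_disj_tv ss max" "G_disj_tv tt max" "G_disj_tv st max" "G_disj_tv ts max"
    unfolding ss_def tt_def st_def ts_def by (intro G_disj_tv_mixed_max up_closed_designated)+
  then show ?thesis
    using assms unfolding sstt_eq by (auto intro: G_disj_tv_inf)
qed

lemma G_neg_tv_mixedI:
  assumes "\<forall>a. (f a \<in> Dp \<longleftrightarrow> a \<notin> Dc) \<and> (f a \<in> Dc \<longleftrightarrow> a \<notin> Dp)"
  shows "G_neg_tv (mixed Dp Dc) f"
  using assms unfolding G_neg_tv_def mixed_def by blast

fun neg_ss :: "tv \<Rightarrow> tv" where
  "neg_ss V1 = V0" | "neg_ss _ = V1"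

fun neg_tt :: "tv \<Rightarrow> tv" where
  "neg_tt V0 = V1" | "neg_tt _ = V0"

fun neg_kleene :: "tv \<Rightarrow> tv" where
  "neg_kleene V0 = V1" | "neg_kleene Vh = Vh" | "neg_kleene V1 = V0"

lemma G_neg_tv_instances:
  "G_neg_tv ss neg_ss" "G_neg_tv tt neg_tt" "G_neg_tv st neg_kleene" "G_neg_tv ts neg_kleene"
  unfolding ss_def tt_def st_def ts_def by (rule G_neg_tv_mixedI, simp add: tv_all)+

lemma G_cond_tv_material:
  assumes "G_neg_tv R n" "G_disj_tv R d"
  shows "G_cond_tv R (\<lambda>a b. d (n a) b)"
  using assms unfolding G_cond_tv_def G_neg_tv_def G_disj_tv_def by blast

lemma G_cond_tv_instances:
  "G_cond_tv ss (\<lambda>a b. max (neg_ss a) b)" "G_cond_tv tt (\<lambda>a b. max (neg_tt a) b)"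
  "G_cond_tv st (\<lambda>a b. max (neg_kleene a) b)" "G_cond_tv ts (\<lambda>a b. max (neg_kleene a) b)"
  by (intro G_cond_tv_material G_neg_tv_instances G_disj_tv_max; simp)+

lemma G_neg_tv_if_G_cond_tv:
  assumes "G_cond_tv R c" "\<And>\<gamma> \<delta>. R (insert z \<gamma>) \<delta>" "\<And>\<gamma> \<delta>. R \<gamma> (insert z \<delta>) \<longleftrightarrow> R \<gamma> \<delta>"
  shows "G_neg_tv R (\<lambda>a. c a z)"
  using assms unfolding G_cond_tv_def G_neg_tv_def by blast

lemma not_G_neg_tv_sstt: "\<not> G_neg_tv sstt n"
proof
  assume "G_neg_tv sstt n"
  then have "sstt (insert (n a) \<gamma>) \<delta> \<longleftrightarrow> sstt \<gamma> (insert a \<delta>)"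
    and "sstt \<gamma> (insert (n a) \<delta>) \<longleftrightarrow> sstt (insert a \<gamma>) \<delta>" for \<gamma> \<delta> a
    unfolding G_neg_tv_def by blast+
  from this(1)[where \<gamma> = "{}" and \<delta> = "{Vh}" and a = Vh]
    this(2)[where \<gamma> = "{}" and \<delta> = "{}" and a = Vh] show False
    by (cases "n Vh") (auto simp: sstt_def ss_def tt_def mixed_def)
qed

lemma not_G_cond_tv_sstt: "\<not> G_cond_tv sstt c"
proof
  assume "G_cond_tv sstt c"
  then have "G_neg_tv sstt (\<lambda>a. c a V0)"
    by (rule G_neg_tv_if_G_cond_tv) (auto simp: sstt_def ss_def tt_def mixed_def)
  then show False
    using not_G_neg_tv_sstt by blast
qed

lemma ext_I_simps [simp]: "ext_I I g None = g" "ext_I I g (Some c) = I c"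
  by (simp_all add: ext_I_def)

lemma eval_ext_map_Some: "eval (ext_I I g) v (map_fm Some A) = eval I v A"
proof (induction A)
  case (Op c As)
  then have "map (eval (ext_I I g) v \<circ> map_fm Some) As = map (eval I v) As"
    by auto
  then show ?case
    by (simp only: fm.map eval.simps map_map ext_I_simps)
qed simp

lemma wf_ext_map_Some: "wf (ext_ar ar k) (map_fm Some A) = wf ar A"
  by (induction A) (auto simp: ext_ar_def list_all_iff)

lemma const_expressive_ext:
  "const_expressive ar I S \<Longrightarrow> const_expressive (ext_ar ar k) (ext_I I g) S"
proof (unfold const_expressive_def, intro allI)
  fix \<alpha>
  assume "\<forall>\<alpha>. \<exists>A. wf ar A \<and> (\<forall>v\<in>S. eval I v A = \<alpha>)"
  then obtain A where "wf ar A" "\<forall>v\<in>S. eval I v A = \<alpha>"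
    by blast
  then show "\<exists>A. wf (ext_ar ar k) A \<and> (\<forall>v\<in>S. eval (ext_I I g) v A = \<alpha>)"
    by (intro exI[of _ "map_fm Some A"]) (simp add: wf_ext_map_Some eval_ext_map_Some)
qed

lemma obtain_constants:
  assumes "const_expressive ar I S"
  obtains \<kappa> where "\<And>\<alpha>. wf ar (\<kappa> \<alpha>)" "\<And>v \<alpha>. v \<in> S \<Longrightarrow> eval I v (\<kappa> \<alpha>) = \<alpha>"
proof -
  have "\<exists>\<kappa>. \<forall>\<alpha>. wf ar (\<kappa> \<alpha>) \<and> (\<forall>v\<in>S. eval I v (\<kappa> \<alpha>) = \<alpha>)"
    using assms unfolding const_expressive_def by (rule choice)
  then show ?thesis
    using that by blast
qed

lemma cons_constant:
  assumes "v0 \<in> S"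
    and "\<forall>v\<in>S. \<forall>A\<in>\<Gamma>. eval I v A = eval I v0 A" "\<forall>v\<in>S. \<forall>A\<in>\<Delta>. eval I v A = eval I v0 A"
  shows "cons R I S \<Gamma> \<Delta> \<longleftrightarrow> R (eval I v0 ` \<Gamma>) (eval I v0 ` \<Delta>)"
proof -
  have "eval I v ` \<Gamma> = eval I v0 ` \<Gamma> \<and> eval I v ` \<Delta> = eval I v0 ` \<Delta>" if "v \<in> S" for v
    using assms(2,3) that by (simp cong: image_cong)
  then show ?thesis
    using assms(1) unfolding cons_def by metis
qed

lemma eval_Op_None_unary:
  "eval (ext_I I (\<lambda>xs. f (xs!0))) v (Op None [A]) = f (eval (ext_I I (\<lambda>xs. f (xs!0))) v A)"
  by simp

lemma eval_Op_None_binary: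
  "eval (ext_I I (\<lambda>xs. f (xs!0) (xs!1))) v (Op None [A, B])
    = f (eval (ext_I I (\<lambda>xs. f (xs!0) (xs!1))) v A) (eval (ext_I I (\<lambda>xs. f (xs!0) (xs!1))) v B)"
  by simp

lemma admits_conjI:
  assumes "G_conj_tv R f"
  shows "admits_conj R ar I S"
  using assms unfolding admits_conj_def G_conj_def G_conj_tv_def cons_def image_insert eval_Op_None_binary by blast

lemma admits_disjI:
  assumes "G_disj_tv R f"
  shows "admits_disj R ar I S"
  using assms unfolding admits_disj_def G_disj_def G_disj_tv_def cons_def image_insert eval_Op_None_binary by blast

lemma admits_negI:
  assumes "G_neg_tv R f"
  shows "admits_neg R ar I S"
  using assms unfolding admits_neg_def G_neg_def G_neg_tv_def cons_def image_insert eval_Op_None_unary by blast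

lemma admits_condI:
  assumes "G_cond_tv R f"
  shows "admits_cond R ar I S"
  using assms unfolding admits_cond_def G_cond_def G_cond_tv_def cons_def image_insert eval_Op_None_binary by blast

lemma admits_negD:
  assumes "S \<noteq> {}" and "const_expressive ar I S" and "admits_neg R ar I S"
  shows "\<exists>f. G_neg_tv R f"
proof -
  obtain f where G: "G_neg {A. wf (ext_ar ar 1) A} (cons R (ext_I I (\<lambda>xs. f (xs!0))) S)
      (\<lambda>A. Op None [A])"
    using assms(3) unfolding admits_neg_def by blast
  obtain \<kappa> where \<kappa>: "\<And>\<alpha>. wf (ext_ar ar 1) (\<kappa> \<alpha>)"
    "\<And>v \<alpha>. v \<in> S \<Longrightarrow> eval (ext_I I (\<lambda>xs. f (xs!0))) v (\<kappa> \<alpha>) = \<alpha>"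
    using obtain_constants[OF const_expressive_ext[OF assms(2)]] by blast
  obtain v0 where "v0 \<in> S"
    using assms(1) by blast
  have "G_neg_tv R f"
    unfolding G_neg_tv_def
  proof (intro allI)
    fix \<gamma> \<delta> a
    show "(R (insert (f a) \<gamma>) \<delta> \<longleftrightarrow> R \<gamma> (insert a \<delta>))
      \<and> (R \<gamma> (insert (f a) \<delta>) \<longleftrightarrow> R (insert a \<gamma>) \<delta>)"
      using \<kappa> \<open>v0 \<in> S\<close> G[unfolded G_neg_def, rule_format, of "\<kappa> ` \<gamma>" "\<kappa> ` \<delta>" "\<kappa> a"]
      by (simp add: cons_constant[OF \<open>v0 \<in> S\<close>] image_image image_subset_iff)
  qed
  then show ?thesis
    by blast
qed

lemma admits_condD:
  assumes "S \<noteq> {}" and "const_expressive ar I S" and "admits_cond R ar I S"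
  shows "\<exists>f. G_cond_tv R f"
proof -
  obtain f where G: "G_cond {A. wf (ext_ar ar 2) A} (cons R (ext_I I (\<lambda>xs. f (xs!0) (xs!1))) S)
      (\<lambda>A B. Op None [A, B])"
    using assms(3) unfolding admits_cond_def by blast
  obtain \<kappa> where \<kappa>: "\<And>\<alpha>. wf (ext_ar ar 2) (\<kappa> \<alpha>)"
    "\<And>v \<alpha>. v \<in> S \<Longrightarrow> eval (ext_I I (\<lambda>xs. f (xs!0) (xs!1))) v (\<kappa> \<alpha>) = \<alpha>"
    using obtain_constants[OF const_expressive_ext[OF assms(2)]] by blast
  obtain v0 where "v0 \<in> S"
    using assms(1) by blast
  have "G_cond_tv R f"
    unfolding G_cond_tv_def
  proof (intro allI)
    fix \<gamma> \<delta> a b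
    show "(R \<gamma> (insert (f a b) \<delta>) \<longleftrightarrow> R (insert a \<gamma>) (insert b \<delta>))
      \<and> (R (insert (f a b) \<gamma>) \<delta> \<longleftrightarrow> R \<gamma> (insert a \<delta>) \<and> R (insert b \<gamma>) \<delta>)"
      using \<kappa> \<open>v0 \<in> S\<close>
        G[unfolded G_cond_def, rule_format, of "\<kappa> ` \<gamma>" "\<kappa> ` \<delta>" "\<kappa> a" "\<kappa> b"]
      by (simp add: cons_constant[OF \<open>v0 \<in> S\<close>] image_image image_subset_iff)
  qed
  then show ?thesis
    by blast
qed

theorem theorem4p1:
  fixes ar :: "'c \<Rightarrow> nat" and I :: "'c \<Rightarrow> tv list \<Rightarrow> tv" and S :: "(nat \<Rightarrow> tv) set"
  assumes "realizes_finite S" and "const_expressive ar I S"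
  shows "(\<forall>R\<in>{ss, tt, st, ts, sstt}. admits_disj R ar I S \<and> admits_conj R ar I S)
       \<and> (\<forall>R\<in>{ss, tt, st, ts}. admits_neg R ar I S \<and> admits_cond R ar I S)
       \<and> \<not> admits_neg sstt ar I S \<and> \<not> admits_cond sstt ar I S"
proof -
  have nonempty: "S \<noteq> {}"
    using assms(1) unfolding realizes_finite_def by (metis empty_iff finite.emptyI)
  have "admits_disj R ar I S \<and> admits_conj R ar I S" if "R \<in> {ss, tt, st, ts, sstt}" for R
    using that by (blast intro: admits_disjI admits_conjI G_disj_tv_max G_conj_tv_min)
  moreover have "admits_neg R ar I S \<and> admits_cond R ar I S" if "R \<in> {ss, tt, st, ts}" for R
    using that G_neg_tv_instances G_cond_tv_instances by (blast intro: admits_negI admits_condI)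
  moreover have "\<not> admits_neg sstt ar I S"
    using admits_negD[OF nonempty assms(2)] not_G_neg_tv_sstt by blast
  moreover have "\<not> admits_cond sstt ar I S"
    using admits_condD[OF nonempty assms(2)] not_G_cond_tv_sstt by blast
  ultimately show ?thesis
    by blast
qed

end
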